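(* Let $G$ be a finite simple graph such that $Y_G\in\Gamma$. Then $G$ has no pair of disjoint edges. Furthermore, if $G$ is connected, then $G$ is either the triangle $C_3$ or the star graph $S_n$ for some $n\ge1$.
   Context: For a finite simple graph $G$, $X_G$ is its chromatic symmetric function (the sum over proper colorings $\kappa$ of $\prod_v x_{\kappa(v)}$), $\omega$ is the involution on symmetric functions with $\omega(p_r)=(-1)^{r-1}p_r$, and $Y_G=(X_G+\omega(X_G))/2$ is the near chromatic symmetric function. $\Gamma=\mathbb{Q}[p_1,p_3,p_5,\dots]$ where $p_r$ are power sums. Two edges $\{v_1,v_2\}$ and $\{v_3,v_4\}$ are disjoint if $v_1,v_2,v_3,v_4$ are all distinct. $C_3$ is the cycle on three vertices and $S_n$ is the tree on $n$ vertices with one internal vertex and $n-1$ leaves. *)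

theory Defs
  imports Complex_Main "HOL-Library.Poly_Mapping" "HOL-Library.FuncSet"
begin

text \<open>A monomial is a finitely supported exponent vector; a formal power series over
  the rationals is its coefficient function.\<close>

type_synonym monom = "nat \<Rightarrow>\<^sub>0 nat"
type_synonym fps_q = "monom \<Rightarrow> rat"

definition sf_one :: fps_q where
  "sf_one \<alpha> = (if \<alpha> = 0 then 1 else 0)"

definition sf_mult :: "fps_q \<Rightarrow> fps_q \<Rightarrow> fps_q" where
  "sf_mult f g \<alpha> = (\<Sum>\<beta>\<in>{\<beta>. \<forall>i. Poly_Mapping.lookup \<beta> i \<le> Poly_Mapping.lookup \<alpha> i}. f \<beta> * g (\<alpha> - \<beta>))"

definition psum :: "nat \<Rightarrow> fps_q" where
  "psum r \<alpha> = (if \<exists>i. \<alpha> = Poly_Mapping.single i r then 1 else 0)"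

definition pprod :: "nat list \<Rightarrow> fps_q" where
  "pprod lam = foldr sf_mult (map psum lam) sf_one"

text \<open>Sign of omega on p_lambda: omega(p_r) = (-1)^(r-1) p_r, extended multiplicatively.\<close>
definition omega_sign :: "nat list \<Rightarrow> rat" where
  "omega_sign lam = (\<Prod>r\<leftarrow>lam. (-1) ^ (r - 1))"

text \<open>The involution omega on symmetric functions: expand f in the power-sum basis
  (finite rational combination of p_lambda, lambda with positive parts) and apply
  omega linearly.  Well-defined on symmetric functions by linear independence of the p_lambda.\<close>
definition omega :: "fps_q \<Rightarrow> fps_q" where
  "omega f = (SOME g. \<exists>L c. finite L \<and> (\<forall>lam\<in>L. \<forall>r\<in>set lam. 0 < r) \<and>
      f = (\<lambda>\<alpha>. \<Sum>lam\<in>L. c lam * pprod lam \<alpha>) \<and>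
      g = (\<lambda>\<alpha>. \<Sum>lam\<in>L. c lam * omega_sign lam * pprod lam \<alpha>))"

definition in_Gamma :: "fps_q \<Rightarrow> bool" where
  "in_Gamma f \<longleftrightarrow> (\<exists>L c. finite L \<and> (\<forall>lam\<in>L. \<forall>r\<in>set lam. odd r) \<and>
      f = (\<lambda>\<alpha>. \<Sum>lam\<in>L. c lam * pprod lam \<alpha>))"

definition simple_graph :: "'a set \<Rightarrow> ('a \<Rightarrow> 'a \<Rightarrow> bool) \<Rightarrow> bool" where
  "simple_graph V E \<longleftrightarrow> finite V \<and> (\<forall>u v. E u v \<longrightarrow> u \<in> V \<and> v \<in> V) \<and>
      (\<forall>u v. E u v \<longrightarrow> E v u) \<and> (\<forall>u. \<not> E u u)"

definition proper_coloring :: "'a set \<Rightarrow> ('a \<Rightarrow> 'a \<Rightarrow> bool) \<Rightarrow> ('a \<Rightarrow> nat) \<Rightarrow> bool" where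
  "proper_coloring V E \<kappa> \<longleftrightarrow> \<kappa> \<in> V \<rightarrow>\<^sub>E (UNIV :: nat set) \<and>
      (\<forall>u v. E u v \<longrightarrow> \<kappa> u \<noteq> \<kappa> v)"

definition chrom_sym :: "'a set \<Rightarrow> ('a \<Rightarrow> 'a \<Rightarrow> bool) \<Rightarrow> fps_q" where
  "chrom_sym V E \<alpha> = of_nat (card {\<kappa>. proper_coloring V E \<kappa> \<and>
      (\<forall>i. Poly_Mapping.lookup \<alpha> i = card {v\<in>V. \<kappa> v = i})})"

definition near_chrom_sym :: "'a set \<Rightarrow> ('a \<Rightarrow> 'a \<Rightarrow> bool) \<Rightarrow> fps_q" where
  "near_chrom_sym V E = (\<lambda>\<alpha>. (chrom_sym V E \<alpha> + omega (chrom_sym V E) \<alpha>) / 2)"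

definition graph_connected :: "'a set \<Rightarrow> ('a \<Rightarrow> 'a \<Rightarrow> bool) \<Rightarrow> bool" where
  "graph_connected V E \<longleftrightarrow> V \<noteq> {} \<and> (\<forall>u\<in>V. \<forall>v\<in>V. E\<^sup>*\<^sup>* u v)"

definition disjoint_edges :: "('a \<Rightarrow> 'a \<Rightarrow> bool) \<Rightarrow> 'a \<Rightarrow> 'a \<Rightarrow> 'a \<Rightarrow> 'a \<Rightarrow> bool" where
  "disjoint_edges E v1 v2 v3 v4 \<longleftrightarrow> E v1 v2 \<and> E v3 v4 \<and> distinct [v1, v2, v3, v4]"

definition graph_iso :: "'a set \<Rightarrow> ('a \<Rightarrow> 'a \<Rightarrow> bool) \<Rightarrow> 'b set \<Rightarrow> ('b \<Rightarrow> 'b \<Rightarrow> bool) \<Rightarrow> bool" where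
  "graph_iso V E W F \<longleftrightarrow> (\<exists>f. bij_betw f V W \<and> (\<forall>u\<in>V. \<forall>v\<in>V. E u v \<longleftrightarrow> F (f u) (f v)))"

definition C3_edges :: "nat \<Rightarrow> nat \<Rightarrow> bool" where
  "C3_edges u v \<longleftrightarrow> u \<noteq> v \<and> u < 3 \<and> v < 3"

definition star_edges :: "nat \<Rightarrow> nat \<Rightarrow> nat \<Rightarrow> bool" where
  "star_edges n u v \<longleftrightarrow> u \<noteq> v \<and> u < n \<and> v < n \<and> (u = 0 \<or> v = 0)"

end

theory Submission
  imports Defs
begin

text \<open>Write n = card V and let phi_n f = 4 f(x_0^2 x_2^2 x_4 ... x_(n-1))
  - 4 f(x_0^2 x_2 ... x_(n-1)) + f(x_0 ... x_(n-1)). On a product p_lam of power sums, phi_n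
  vanishes when all parts are odd and is fixed by omega. Deletion-contraction on vertex-weighted
  graphs writes X_G as a rational combination of such products, so Y_G in Gamma forces
  phi_n(X_G) = phi_n(Y_G) = 0. On the other hand, merging the color 1 into 0 and 3 into 2 relates
  the three coefficients to bijective colorings, and inclusion-exclusion shows that phi_n(X_G)
  counts the bijective colorings having an edge colored 0-1 and an edge colored 2-3; two disjoint
  edges give such a coloring. A connected graph whose edges pairwise meet is a triangle or a star.\<close>

lemma finite_monoms_below:
  "finite {\<beta>::monom. \<forall>i. Poly_Mapping.lookup \<beta> i \<le> Poly_Mapping.lookup \<alpha> i}"
proof -
  let ?B = "{\<beta>::monom. \<forall>i. Poly_Mapping.lookup \<beta> i \<le> Poly_Mapping.lookup \<alpha> i}"
  let ?h = "\<lambda>\<beta>::monom. restrict (Poly_Mapping.lookup \<beta>) (Poly_Mapping.keys \<alpha>)"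
  have "inj_on ?h ?B"
  proof (rule inj_onI)
    fix x y assume x: "x \<in> ?B" and y: "y \<in> ?B" and e: "?h x = ?h y"
    show "x = y"
    proof (rule poly_mapping_eqI)
      fix k
      show "Poly_Mapping.lookup x k = Poly_Mapping.lookup y k"
      proof (cases "k \<in> Poly_Mapping.keys \<alpha>")
        case True then show ?thesis using fun_cong[OF e, of k] by simp
      next
        case False
        then have "Poly_Mapping.lookup \<alpha> k = 0" by (simp add: in_keys_iff)
        then show ?thesis using x y by (metis le_zero_eq mem_Collect_eq)
      qed
    qed
  qed
  moreover have "?h ` ?B \<subseteq> Pi\<^sub>E (Poly_Mapping.keys \<alpha>) (\<lambda>i. {0..Poly_Mapping.lookup \<alpha> i})"
    by auto
  moreover have "finite (Pi\<^sub>E (Poly_Mapping.keys \<alpha>) (\<lambda>i. {0..Poly_Mapping.lookup \<alpha> i}))"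
    by (intro finite_PiE) auto
  ultimately show ?thesis by (meson finite_imageD finite_subset)
qed

lemma finite_exponents_ge: "0 < (k::nat) \<Longrightarrow> finite {i. k \<le> Poly_Mapping.lookup \<alpha> i}"
  by (rule finite_subset[of _ "Poly_Mapping.keys \<alpha>"]) (auto simp: in_keys_iff)

lemma finite_exponents_eq: "0 < (k::nat) \<Longrightarrow> finite {i. Poly_Mapping.lookup \<alpha> i = k}"
  by (rule finite_subset[of _ "Poly_Mapping.keys \<alpha>"]) (auto simp: in_keys_iff)

lemma lookup_minus_single:
  "Poly_Mapping.lookup (\<alpha> - Poly_Mapping.single i r) j =
    (if j = i then Poly_Mapping.lookup \<alpha> j - r else Poly_Mapping.lookup \<alpha> j)"
  by (simp add: lookup_minus lookup_single when_def)

lemma monom_eq_0_iff: "\<alpha> = 0 \<longleftrightarrow> (\<forall>i. Poly_Mapping.lookup \<alpha> i = 0)"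
  by (metis lookup_zero poly_mapping_eqI)

lemma sf_mult_psum:
  assumes r: "0 < r"
  shows "sf_mult (psum r) f \<alpha> =
    (\<Sum>i\<in>{i. r \<le> Poly_Mapping.lookup \<alpha> i}. f (\<alpha> - Poly_Mapping.single i r))"
proof -
  let ?B = "{\<beta>::monom. \<forall>i. Poly_Mapping.lookup \<beta> i \<le> Poly_Mapping.lookup \<alpha> i}"
  let ?I = "{i. r \<le> Poly_Mapping.lookup \<alpha> i}"
  let ?single = "\<lambda>i. Poly_Mapping.single i r"
  have inj: "inj ?single"
    by (rule injI) (metis lookup_single_eq r less_numeral_extra(3) lookup_single_not_eq)
  have sub: "?single ` ?I \<subseteq> ?B" by (auto simp: lookup_single when_def)
  have "sf_mult (psum r) f \<alpha> = (\<Sum>\<beta>\<in>?B. psum r \<beta> * f (\<alpha> - \<beta>))"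
    by (simp add: sf_mult_def)
  also have "\<dots> = (\<Sum>\<beta>\<in>?single ` ?I. psum r \<beta> * f (\<alpha> - \<beta>))"
  proof (rule sum.mono_neutral_right[OF finite_monoms_below sub], intro ballI)
    fix \<beta> assume \<beta>: "\<beta> \<in> ?B - ?single ` ?I"
    have "psum r \<beta> = 0"
    proof (rule ccontr)
      assume "psum r \<beta> \<noteq> 0"
      then obtain i where i: "\<beta> = ?single i" by (auto simp: psum_def split: if_splits)
      then have "i \<in> ?I" using \<beta> by (metis (mono_tags) DiffD1 lookup_single_eq mem_Collect_eq)
      with \<beta> i show False by blast
    qed
    then show "psum r \<beta> * f (\<alpha> - \<beta>) = 0" by simp
  qed
  also have "\<dots> = (\<Sum>i\<in>?I. psum r (?single i) * f (\<alpha> - ?single i))"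
    by (rule sum.reindex[OF inj_on_subset[OF inj], simplified])
  also have "\<dots> = (\<Sum>i\<in>?I. f (\<alpha> - ?single i))"
    by (rule sum.cong) (auto simp: psum_def)
  finally show ?thesis .
qed

lemma pprod_Nil: "pprod [] \<alpha> = (if \<alpha> = 0 then 1 else 0)"
  by (simp add: pprod_def sf_one_def)

lemma pprod_Cons: "pprod (r # lam) = sf_mult (psum r) (pprod lam)"
  by (simp add: pprod_def)

definition exponent_count :: "monom \<Rightarrow> nat \<Rightarrow> nat" where
  "exponent_count \<alpha> k = card {i. Poly_Mapping.lookup \<alpha> i = k}"

text \<open>pcoeff lam a b is the value of pprod lam at any monomial with
  a exponents equal to 2, b exponents equal to 1 and all others 0:
  the first part of lam takes one variable of a matching exponent.\<close>
fun pcoeff :: "nat list \<Rightarrow> nat \<Rightarrow> nat \<Rightarrow> rat" where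
  "pcoeff [] a b = (if a = 0 \<and> b = 0 then 1 else 0)"
| "pcoeff (r # lam) a b =
    (if r = 1 then of_nat a * pcoeff lam (a - 1) (b + 1) + of_nat b * pcoeff lam a (b - 1)
     else if r = 2 then of_nat a * pcoeff lam (a - 1) b else 0)"

lemma exponent_count_minus_single:
  assumes k: "0 < k" and r: "r \<le> Poly_Mapping.lookup \<alpha> i"
  shows "exponent_count (\<alpha> - Poly_Mapping.single i r) k
           + (if Poly_Mapping.lookup \<alpha> i = k then 1 else 0)
         = exponent_count \<alpha> k + (if Poly_Mapping.lookup \<alpha> i - r = k then 1 else 0)"
proof -
  let ?S = "{j. Poly_Mapping.lookup \<alpha> j = k}"
  let ?S' = "{j. Poly_Mapping.lookup (\<alpha> - Poly_Mapping.single i r) j = k}"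
  have fin: "finite ?S" "finite ?S'" using k by (auto intro: finite_exponents_eq)
  have same: "?S' - {i} = ?S - {i}" by (auto simp: lookup_minus_single)
  have card_remove: "card A = card (A - {i}) + (if i \<in> A then 1 else 0)" if "finite A" for A
    using that card_Suc_Diff1[of A i] by (cases "i \<in> A") auto
  have "card ?S = card (?S - {i}) + (if Poly_Mapping.lookup \<alpha> i = k then 1 else 0)"
    using card_remove[OF fin(1)] by simp
  moreover have "card ?S' = card (?S' - {i}) + (if Poly_Mapping.lookup \<alpha> i - r = k then 1 else 0)"
    using card_remove[OF fin(2)] by (simp add: lookup_minus_single)
  ultimately show ?thesis using same by (simp add: exponent_count_def)
qed

lemma pprod_eq_pcoeff:
  assumes "\<forall>r\<in>set lam. 0 < r" and "\<forall>i. Poly_Mapping.lookup \<alpha> i \<le> 2"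
  shows "pprod lam \<alpha> = pcoeff lam (exponent_count \<alpha> 2) (exponent_count \<alpha> 1)"
  using assms
proof (induction lam arbitrary: \<alpha>)
  case Nil
  have "(\<forall>i. Poly_Mapping.lookup \<alpha> i = 0) \<longleftrightarrow>
      {i. Poly_Mapping.lookup \<alpha> i = 2} = {} \<and> {i. Poly_Mapping.lookup \<alpha> i = 1} = {}"
    using Nil.prems(2) by (auto, metis le_Suc_eq le_zero_eq numeral_2_eq_2)
  then show ?case
    by (simp add: pprod_Nil monom_eq_0_iff exponent_count_def finite_exponents_eq)
next
  case (Cons r lam)
  have r: "0 < r" and lam: "\<forall>r\<in>set lam. 0 < r" using Cons.prems by auto
  let ?a = "exponent_count \<alpha> 2" and ?b = "exponent_count \<alpha> 1"
  let ?A2 = "{i. Poly_Mapping.lookup \<alpha> i = 2}" and ?A1 = "{i. Poly_Mapping.lookup \<alpha> i = 1}"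
  let ?term = "\<lambda>i. pprod lam (\<alpha> - Poly_Mapping.single i r)"
  have IH: "?term i = pcoeff lam (exponent_count (\<alpha> - Poly_Mapping.single i r) 2)
      (exponent_count (\<alpha> - Poly_Mapping.single i r) 1)" for i
    using Cons.prems(2) by (intro Cons.IH[OF lam]) (simp add: lookup_minus_single, meson diff_le_self order_trans)
  note counts = exponent_count_minus_single[of 2 r \<alpha>] exponent_count_minus_single[of 1 r \<alpha>]
  have fin: "finite ?A2" "finite ?A1" by (auto intro: finite_exponents_eq)
  have "pprod (r # lam) \<alpha> = (\<Sum>i\<in>{i. r \<le> Poly_Mapping.lookup \<alpha> i}. ?term i)"
    by (simp add: pprod_Cons sf_mult_psum[OF r])
  also consider "r = 1" | "r = 2" | "3 \<le> r" using r by linarith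
  then have "(\<Sum>i\<in>{i. r \<le> Poly_Mapping.lookup \<alpha> i}. ?term i) = pcoeff (r # lam) ?a ?b"
  proof cases
    case 1
    have "{i. r \<le> Poly_Mapping.lookup \<alpha> i} = ?A2 \<union> ?A1"
      using Cons.prems(2) 1 by (auto, metis One_nat_def le_Suc_eq le_antisym numeral_2_eq_2)
    then have "(\<Sum>i\<in>{i. r \<le> Poly_Mapping.lookup \<alpha> i}. ?term i)
        = (\<Sum>i\<in>?A2. ?term i) + (\<Sum>i\<in>?A1. ?term i)"
      using fin by (simp add: sum.union_disjoint disjoint_iff)
    also have "(\<Sum>i\<in>?A2. ?term i) = (\<Sum>i\<in>?A2. pcoeff lam (?a - 1) (?b + 1))"
    proof (rule sum.cong[OF refl])
      fix i assume "i \<in> ?A2"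
      then show "?term i = pcoeff lam (?a - 1) (?b + 1)"
        using IH[of i] counts[of i, symmetric] 1 by simp
    qed
    also have "(\<Sum>i\<in>?A1. ?term i) = (\<Sum>i\<in>?A1. pcoeff lam ?a (?b - 1))"
    proof (rule sum.cong[OF refl])
      fix i assume "i \<in> ?A1"
      then show "?term i = pcoeff lam ?a (?b - 1)"
        using IH[of i] counts[of i, symmetric] 1 by simp
    qed
    finally show ?thesis using 1 by (simp add: exponent_count_def)
  next
    case 2
    have "{i. r \<le> Poly_Mapping.lookup \<alpha> i} = ?A2"
      using Cons.prems(2) 2 by (auto intro: antisym)
    moreover have "(\<Sum>i\<in>?A2. ?term i) = (\<Sum>i\<in>?A2. pcoeff lam (?a - 1) ?b)"
    proof (rule sum.cong[OF refl])
      fix i assume "i \<in> ?A2"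
      then show "?term i = pcoeff lam (?a - 1) ?b"
        using IH[of i] counts[of i, symmetric] 2 by simp
    qed
    ultimately show ?thesis using 2 by (simp add: exponent_count_def)
  next
    case 3
    have "Poly_Mapping.lookup \<alpha> i < r" for i
    proof -
      have "Poly_Mapping.lookup \<alpha> i \<le> 2" using Cons.prems(2) by blast
      then show ?thesis using 3 by linarith
    qed
    then have "{i. r \<le> Poly_Mapping.lookup \<alpha> i} = {}" by (simp add: not_le[symmetric])
    then show ?thesis using 3 by simp
  qed
  finally show ?case .
qed

lemma pcoeff_eq_0_if_not_12: "\<not> set lam \<subseteq> {1, 2} \<Longrightarrow> pcoeff lam a b = 0"
proof (induction lam arbitrary: a b)
  case (Cons r lam)
  then show ?case by (cases "set lam \<subseteq> {1, 2}") auto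
qed simp

lemma pcoeff_0:
  "set lam \<subseteq> {1, 2} \<Longrightarrow> pcoeff lam 0 b =
    (if count_list lam 2 = 0 \<and> count_list lam 1 = b then fact b else 0)"
proof (induction lam arbitrary: b)
  case (Cons r lam)
  then have lam: "set lam \<subseteq> {1, 2}" and "r = 1 \<or> r = 2" by auto
  then show ?case using Cons.IH[OF lam] by (cases b) auto
qed simp

lemma pcoeff_1:
  "set lam \<subseteq> {1, 2} \<Longrightarrow> pcoeff lam 1 b =
    (if count_list lam 2 = 0 \<and> count_list lam 1 = b + 2 then fact (b + 2) / 2
     else if count_list lam 2 = 1 \<and> count_list lam 1 = b then fact b else 0)"
proof (induction lam arbitrary: b)
  case (Cons r lam)
  then have lam: "set lam \<subseteq> {1, 2}" and "r = 1 \<or> r = 2" by auto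
  then show ?case using Cons.IH[OF lam] pcoeff_0[OF lam]
    by (cases b) (auto simp: field_simps)
qed simp

lemma pcoeff_2:
  "set lam \<subseteq> {1, 2} \<Longrightarrow> pcoeff lam 2 b =
    (if count_list lam 2 = 0 \<and> count_list lam 1 = b + 4 then fact (b + 4) / 4
     else if count_list lam 2 = 1 \<and> count_list lam 1 = b + 2 then fact (b + 2)
     else if count_list lam 2 = 2 \<and> count_list lam 1 = b then 2 * fact b else 0)"
proof (induction lam arbitrary: b)
  case (Cons r lam)
  then have lam: "set lam \<subseteq> {1, 2}" and "r = 1 \<or> r = 2" by auto
  then show ?case using Cons.IH[OF lam] pcoeff_1[OF lam]
    by (cases b) (auto simp: field_simps numeral_eq_Suc)
qed simp

section \<open>The chromatic symmetric function lies in the span of the power sums\<close>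

text \<open>Colorings of a vertex-weighted graph, graded by the total weight of each color class.
  Weights are needed because contracting an edge adds the weights of its ends.\<close>
definition wcolorings :: "'a set \<Rightarrow> ('a \<Rightarrow> 'a \<Rightarrow> bool) \<Rightarrow> ('a \<Rightarrow> nat) \<Rightarrow> monom \<Rightarrow> ('a \<Rightarrow> nat) set" where
  "wcolorings V E w \<alpha> = {\<kappa> \<in> V \<rightarrow>\<^sub>E UNIV. (\<forall>u v. E u v \<longrightarrow> \<kappa> u \<noteq> \<kappa> v) \<and>
      (\<forall>i. Poly_Mapping.lookup \<alpha> i = (\<Sum>v\<in>{v\<in>V. \<kappa> v = i}. w v))}"

definition in_psum_span :: "fps_q \<Rightarrow> bool" where
  "in_psum_span f \<longleftrightarrow> (\<exists>L c. finite L \<and> (\<forall>lam\<in>L. \<forall>r\<in>set lam. 0 < r) \<and>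
      f = (\<lambda>\<alpha>. \<Sum>lam\<in>L. c lam * pprod lam \<alpha>))"

lemma in_psum_span_pprod: "\<forall>r\<in>set lam. 0 < r \<Longrightarrow> in_psum_span (pprod lam)"
  unfolding in_psum_span_def by (rule exI[of _ "{lam}"], rule exI[of _ "\<lambda>_. 1"]) auto

lemma in_psum_span_diff:
  assumes "in_psum_span f" "in_psum_span g"
  shows "in_psum_span (\<lambda>\<alpha>. f \<alpha> - g \<alpha>)"
proof -
  obtain L c where L: "finite L" "\<forall>lam\<in>L. \<forall>r\<in>set lam. 0 < r"
    "f = (\<lambda>\<alpha>. \<Sum>lam\<in>L. c lam * pprod lam \<alpha>)"
    using assms(1) unfolding in_psum_span_def by blast
  obtain M d where M: "finite M" "\<forall>lam\<in>M. \<forall>r\<in>set lam. 0 < r"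
    "g = (\<lambda>\<alpha>. \<Sum>lam\<in>M. d lam * pprod lam \<alpha>)"
    using assms(2) unfolding in_psum_span_def by blast
  define e where "e lam = (if lam \<in> L then c lam else 0) - (if lam \<in> M then d lam else 0)" for lam
  have "f \<alpha> = (\<Sum>lam\<in>L \<union> M. (if lam \<in> L then c lam else 0) * pprod lam \<alpha>)" for \<alpha>
    unfolding L(3) using L(1) M(1) by (intro sum.mono_neutral_cong_left) auto
  moreover have "g \<alpha> = (\<Sum>lam\<in>L \<union> M. (if lam \<in> M then d lam else 0) * pprod lam \<alpha>)" for \<alpha>
    unfolding M(3) using L(1) M(1) by (intro sum.mono_neutral_cong_left) auto
  ultimately have "(\<lambda>\<alpha>. f \<alpha> - g \<alpha>) = (\<lambda>\<alpha>. \<Sum>lam\<in>L \<union> M. e lam * pprod lam \<alpha>)"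
    by (simp add: e_def sum_subtractf[symmetric] left_diff_distrib)
  then show ?thesis unfolding in_psum_span_def using L(1,2) M(1,2) by blast
qed

lemma finite_wcolorings:
  assumes "finite V" "\<forall>v\<in>V. 0 < w v"
  shows "finite (wcolorings V E w \<alpha>)"
proof (rule finite_subset)
  show "wcolorings V E w \<alpha> \<subseteq> V \<rightarrow>\<^sub>E Poly_Mapping.keys \<alpha>"
  proof
    fix \<kappa> assume \<kappa>: "\<kappa> \<in> wcolorings V E w \<alpha>"
    show "\<kappa> \<in> V \<rightarrow>\<^sub>E Poly_Mapping.keys \<alpha>"
    proof (rule PiE_I)
      fix v assume v: "v \<in> V"
      have "w v \<le> (\<Sum>u\<in>{u\<in>V. \<kappa> u = \<kappa> v}. w u)"
        using v assms(1) by (intro member_le_sum) auto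
      then show "\<kappa> v \<in> Poly_Mapping.keys \<alpha>"
        using \<kappa> assms(2) v by (auto simp: wcolorings_def in_keys_iff)
    next
      fix v assume "v \<notin> V"
      then show "\<kappa> v = undefined" using \<kappa> by (auto simp: wcolorings_def)
    qed
  qed
  show "finite (V \<rightarrow>\<^sub>E Poly_Mapping.keys \<alpha>)" using assms by (intro finite_PiE) auto
qed

lemma class_weights_insert_iff:
  fixes \<kappa> w :: "'a \<Rightarrow> nat" and \<alpha> :: monom
  assumes x: "x \<notin> V" "finite V" "\<kappa> x = i" and le: "w x \<le> Poly_Mapping.lookup \<alpha> i"
  shows "(\<forall>j. Poly_Mapping.lookup \<alpha> j = (\<Sum>v\<in>{v\<in>insert x V. \<kappa> v = j}. w v)) \<longleftrightarrow>
      (\<forall>j. Poly_Mapping.lookup (\<alpha> - Poly_Mapping.single i (w x)) j = (\<Sum>v\<in>{v\<in>V. \<kappa> v = j}. w v))"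
proof -
  have split: "(\<Sum>v\<in>{v\<in>insert x V. \<kappa> v = j}. w v)
      = (if j = i then w x else 0) + (\<Sum>v\<in>{v\<in>V. \<kappa> v = j}. w v)" for j
  proof (cases "j = i")
    case True
    then have "{v\<in>insert x V. \<kappa> v = j} = insert x {v\<in>V. \<kappa> v = j}" using x by auto
    then show ?thesis using True x by simp
  next
    case False
    then have "{v\<in>insert x V. \<kappa> v = j} = {v\<in>V. \<kappa> v = j}" using x by auto
    then show ?thesis using False by simp
  qed
  have arith: "(\<forall>j. a j = (if j = i then c else 0) + b j) \<longleftrightarrow>
      (\<forall>j. (if j = i then a j - c else a j) = b j)" if "c \<le> a i" for a b :: "nat \<Rightarrow> nat" and c
  proof -
    have "a j = (if j = i then c else 0) + b j \<longleftrightarrow> (if j = i then a j - c else a j) = b j" for j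
      using that by (cases "j = i") auto
    then show ?thesis by blast
  qed
  show ?thesis by (simp only: split lookup_minus_single) (rule arith[where a = "Poly_Mapping.lookup \<alpha>" and c = "w x", OF le])
qed

lemma card_wcolorings_insert_edgeless_fibre:
  assumes x: "x \<notin> V" and fin: "finite V" and i: "w x \<le> Poly_Mapping.lookup \<alpha> i"
  shows "card {\<kappa>\<in>wcolorings (insert x V) (\<lambda>_ _. False) w \<alpha>. \<kappa> x = i} =
    card (wcolorings V (\<lambda>_ _. False) w (\<alpha> - Poly_Mapping.single i (w x)))"
    (is "card ?S = card ?C'")
proof (rule bij_betw_same_card[of "\<lambda>\<kappa>. restrict \<kappa> V"],
       rule bij_betw_byWitness[where f' = "\<lambda>\<kappa>. \<kappa>(x := i)"])
  have iff: "(\<forall>j. Poly_Mapping.lookup \<alpha> j = (\<Sum>v\<in>{v\<in>insert x V. \<kappa> v = j}. w v)) \<longleftrightarrow>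
    (\<forall>j. Poly_Mapping.lookup (\<alpha> - Poly_Mapping.single i (w x)) j = (\<Sum>v\<in>{v\<in>V. \<kappa> v = j}. w v))"
    if "\<kappa> x = i" for \<kappa>
    using class_weights_insert_iff[of x V \<kappa> i w \<alpha>, OF x fin that i] .
  show "\<forall>\<kappa>\<in>?S. (restrict \<kappa> V)(x := i) = \<kappa>"
  proof (intro ballI ext)
    fix \<kappa> v assume "\<kappa> \<in> ?S"
    then show "((restrict \<kappa> V)(x := i)) v = \<kappa> v"
      by (cases "v \<in> V") (auto simp: wcolorings_def PiE_def extensional_def)
  qed
  show "\<forall>\<kappa>\<in>?C'. restrict (\<kappa>(x := i)) V = \<kappa>"
  proof (intro ballI ext)
    fix \<kappa> v assume "\<kappa> \<in> ?C'"
    then show "restrict (\<kappa>(x := i)) V v = \<kappa> v"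
      using x by (cases "v \<in> V") (auto simp: wcolorings_def PiE_def extensional_def)
  qed
  show "(\<lambda>\<kappa>. restrict \<kappa> V) ` ?S \<subseteq> ?C'"
  proof (rule image_subsetI)
    fix \<kappa> assume "\<kappa> \<in> ?S"
    then have \<kappa>: "\<kappa> \<in> wcolorings (insert x V) (\<lambda>_ _. False) w \<alpha>" "\<kappa> x = i" by simp_all
    have "{v\<in>V. restrict \<kappa> V v = j} = {v\<in>V. \<kappa> v = j}" for j by auto
    then show "restrict \<kappa> V \<in> ?C'" using \<kappa> iff[of \<kappa>, OF \<kappa>(2)] by (simp add: wcolorings_def)
  qed
  show "(\<lambda>\<kappa>. \<kappa>(x := i)) ` ?C' \<subseteq> ?S"
  proof (rule image_subsetI)
    fix \<kappa> assume \<kappa>: "\<kappa> \<in> ?C'"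
    have "{v\<in>V. (\<kappa>(x := i)) v = j} = {v\<in>V. \<kappa> v = j}" for j using x by auto
    then show "\<kappa>(x := i) \<in> ?S"
      using \<kappa> iff[of "\<kappa>(x := i)"] x by (auto simp: wcolorings_def PiE_def extensional_def)
  qed
qed

lemma card_wcolorings_insert_edgeless:
  assumes x: "x \<notin> V" and fin: "finite V" and pos: "\<forall>v\<in>insert x V. 0 < w v"
  shows "card (wcolorings (insert x V) (\<lambda>_ _. False) w \<alpha>) =
    (\<Sum>i\<in>{i. w x \<le> Poly_Mapping.lookup \<alpha> i}.
       card (wcolorings V (\<lambda>_ _. False) w (\<alpha> - Poly_Mapping.single i (w x))))"
proof -
  let ?C = "wcolorings (insert x V) (\<lambda>_ _. False) w \<alpha>"
  let ?I = "{i. w x \<le> Poly_Mapping.lookup \<alpha> i}"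
  let ?S = "\<lambda>i. {\<kappa>\<in>?C. \<kappa> x = i}"
  have cover: "?C = (\<Union>i\<in>?I. ?S i)"
  proof (intro equalityI subsetI)
    fix \<kappa> assume \<kappa>: "\<kappa> \<in> ?C"
    have "w x \<le> (\<Sum>u\<in>{u\<in>insert x V. \<kappa> u = \<kappa> x}. w u)"
      using fin by (intro member_le_sum) auto
    also have "\<dots> = Poly_Mapping.lookup \<alpha> (\<kappa> x)" using \<kappa> by (simp add: wcolorings_def)
    finally show "\<kappa> \<in> (\<Union>i\<in>?I. ?S i)" using \<kappa> by auto
  qed auto
  have "card ?C = card (\<Union>i\<in>?I. ?S i)" by (rule arg_cong[OF cover])
  also have "\<dots> = (\<Sum>i\<in>?I. card (?S i))"
    using pos finite_exponents_ge[of "w x" \<alpha>] finite_wcolorings[where V = "insert x V" and E = "\<lambda>_ _. False" and w = w and \<alpha> = \<alpha>] fin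
    by (intro card_UN_disjoint) auto
  also have "\<dots> = (\<Sum>i\<in>?I. card (wcolorings V (\<lambda>_ _. False) w (\<alpha> - Poly_Mapping.single i (w x))))"
    using card_wcolorings_insert_edgeless_fibre[OF x fin] by simp
  finally show ?thesis .
qed

lemma card_wcolorings_edgeless:
  assumes "distinct xs" "\<forall>v\<in>set xs. 0 < w v"
  shows "of_nat (card (wcolorings (set xs) (\<lambda>_ _. False) w \<alpha>)) = pprod (map w xs) \<alpha>"
  using assms
proof (induction xs arbitrary: \<alpha>)
  case Nil
  have "wcolorings {} (\<lambda>_ _. False) w \<alpha> = (if \<alpha> = 0 then {\<lambda>_. undefined} else {})"
    unfolding wcolorings_def monom_eq_0_iff by auto
  then show ?case by (simp add: pprod_Nil)
next
  case (Cons x xs)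
  then have x: "x \<notin> set xs" "distinct xs" "\<forall>v\<in>set xs. 0 < w v" and wx: "0 < w x" by auto
  have "of_nat (card (wcolorings (set (x # xs)) (\<lambda>_ _. False) w \<alpha>)) =
    (\<Sum>i\<in>{i. w x \<le> Poly_Mapping.lookup \<alpha> i}.
       of_nat (card (wcolorings (set xs) (\<lambda>_ _. False) w (\<alpha> - Poly_Mapping.single i (w x)))) :: rat)"
    using card_wcolorings_insert_edgeless[of x "set xs" w \<alpha>] x Cons.prems(2) by simp
  also have "\<dots> = pprod (map w (x # xs)) \<alpha>"
    using Cons.IH[OF x(2,3)] by (simp add: pprod_Cons sf_mult_psum[OF wx])
  finally show ?case .
qed

definition edge_delete :: "('a \<Rightarrow> 'a \<Rightarrow> bool) \<Rightarrow> 'a \<Rightarrow> 'a \<Rightarrow> 'a \<Rightarrow> 'a \<Rightarrow> bool" where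
  "edge_delete E u v x y \<longleftrightarrow> E x y \<and> \<not> (x = u \<and> y = v) \<and> \<not> (x = v \<and> y = u)"

definition edge_contract :: "'a set \<Rightarrow> ('a \<Rightarrow> 'a \<Rightarrow> bool) \<Rightarrow> 'a \<Rightarrow> 'a \<Rightarrow> 'a \<Rightarrow> 'a \<Rightarrow> bool" where
  "edge_contract V E u v x y \<longleftrightarrow> x \<in> V - {v} \<and> y \<in> V - {v} \<and> x \<noteq> y \<and>
     (E x y \<or> (x = u \<and> (E v y \<or> E y v)) \<or> (y = u \<and> (E x v \<or> E v x)))"

lemma class_weight_contract:
  fixes \<kappa> w :: "'a \<Rightarrow> nat"
  assumes fin: "finite V" and uv: "u \<in> V" "v \<in> V" "u \<noteq> v" and same: "\<kappa> u = \<kappa> v"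
  shows "(\<Sum>x\<in>{x\<in>V - {v}. \<kappa> x = j}. (w(u := w u + w v)) x) = (\<Sum>x\<in>{x\<in>V. \<kappa> x = j}. w x)"
proof (cases "\<kappa> u = j")
  case True
  have "(\<Sum>x\<in>{x\<in>V - {v}. \<kappa> x = j}. (w(u := w u + w v)) x)
      = w v + (\<Sum>x\<in>{x\<in>V - {v}. \<kappa> x = j}. w x)"
    using fin uv True by (simp add: sum.remove[of _ u] sum.cong[of _ _ "w(u := _)" w])
  also have "\<dots> = (\<Sum>x\<in>insert v {x\<in>V - {v}. \<kappa> x = j}. w x)" using fin by simp
  also have "insert v {x\<in>V - {v}. \<kappa> x = j} = {x\<in>V. \<kappa> x = j}" using uv same True by auto
  finally show ?thesis .
next
  case False
  have "(\<Sum>x\<in>{x\<in>V - {v}. \<kappa> x = j}. (w(u := w u + w v)) x) = (\<Sum>x\<in>{x\<in>V - {v}. \<kappa> x = j}. w x)"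
    using False by (intro sum.cong) auto
  also have "\<dots> = (\<Sum>x\<in>{x\<in>V. \<kappa> x = j}. w x)" using False same by (intro sum.cong) auto
  finally show ?thesis .
qed

lemma restrict_in_wcolorings_contract:
  assumes fin: "finite V" and uv: "u \<in> V" "v \<in> V" "u \<noteq> v"
    and \<kappa>: "\<kappa> \<in> wcolorings V (edge_delete E u v) w \<alpha>" and same: "\<kappa> u = \<kappa> v"
  shows "restrict \<kappa> (V - {v}) \<in> wcolorings (V - {v}) (edge_contract V E u v) (w(u := w u + w v)) \<alpha>"
proof -
  have proper: "\<kappa> x \<noteq> \<kappa> y" if "edge_delete E u v x y" for x y
    using \<kappa> that by (simp add: wcolorings_def)
  have "restrict \<kappa> (V - {v}) x \<noteq> restrict \<kappa> (V - {v}) y" if e: "edge_contract V E u v x y" for x y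
  proof -
    have xy: "x \<in> V - {v}" "y \<in> V - {v}" "x \<noteq> y" using e by (auto simp: edge_contract_def)
    have "\<kappa> x \<noteq> \<kappa> y"
      using e xy proper[of x y] proper[of v y] proper[of y v] proper[of x v] proper[of v x] same
      by (auto simp: edge_contract_def edge_delete_def)
    then show ?thesis using xy by simp
  qed
  moreover have "{x\<in>V - {v}. restrict \<kappa> (V - {v}) x = j} = {x\<in>V - {v}. \<kappa> x = j}" for j
    by auto
  ultimately show ?thesis
    using \<kappa> class_weight_contract[OF fin uv same, where w = w] by (simp add: wcolorings_def)
qed

lemma extend_in_wcolorings_delete:
  assumes fin: "finite V" and inV: "\<forall>x y. E x y \<longrightarrow> x \<in> V \<and> y \<in> V" and irr: "\<forall>x. \<not> E x x"
    and uv: "u \<in> V" "v \<in> V" "u \<noteq> v"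
    and \<kappa>: "\<kappa> \<in> wcolorings (V - {v}) (edge_contract V E u v) (w(u := w u + w v)) \<alpha>"
  shows "\<kappa>(v := \<kappa> u) \<in> wcolorings V (edge_delete E u v) w \<alpha>"
proof -
  let ?\<kappa>' = "\<kappa>(v := \<kappa> u)"
  have proper: "\<kappa> x \<noteq> \<kappa> y" if "edge_contract V E u v x y" for x y
    using \<kappa> that by (simp add: wcolorings_def)
  have "?\<kappa>' x \<noteq> ?\<kappa>' y" if e: "edge_delete E u v x y" for x y
  proof -
    have "E x y" "x \<in> V" "y \<in> V" "x \<noteq> y" using e inV irr by (auto simp: edge_delete_def)
    then show ?thesis
      using e uv proper[of x y] proper[of u y] proper[of x u]
      by (auto simp: edge_contract_def edge_delete_def)
  qed
  moreover have "?\<kappa>' \<in> V \<rightarrow>\<^sub>E UNIV" using \<kappa> uv by (auto simp: wcolorings_def PiE_def extensional_def)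
  moreover have "{x\<in>V - {v}. ?\<kappa>' x = j} = {x\<in>V - {v}. \<kappa> x = j}" for j by auto
  ultimately show ?thesis
    using \<kappa> class_weight_contract[OF fin uv, where \<kappa> = "?\<kappa>'" and w = w] by (simp add: wcolorings_def)
qed

lemma card_wcolorings_delete_contract:
  assumes fin: "finite V" and inV: "\<forall>x y. E x y \<longrightarrow> x \<in> V \<and> y \<in> V" and irr: "\<forall>x. \<not> E x x"
    and e: "E u v" and pos: "\<forall>x\<in>V. 0 < w x"
  shows "card (wcolorings V (edge_delete E u v) w \<alpha>) =
    card (wcolorings V E w \<alpha>) +
    card (wcolorings (V - {v}) (edge_contract V E u v) (w(u := w u + w v)) \<alpha>)"
proof -
  let ?D = "wcolorings V (edge_delete E u v) w \<alpha>"
  let ?M = "{\<kappa>\<in>?D. \<kappa> u = \<kappa> v}"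
  let ?K = "wcolorings (V - {v}) (edge_contract V E u v) (w(u := w u + w v)) \<alpha>"
  have uv: "u \<in> V" "v \<in> V" "u \<noteq> v" using inV irr e by metis+
  have split: "?D = wcolorings V E w \<alpha> \<union> ?M"
  proof (intro equalityI subsetI)
    fix \<kappa> assume \<kappa>: "\<kappa> \<in> ?D"
    have "\<kappa> x \<noteq> \<kappa> y" if "E x y" "\<kappa> u \<noteq> \<kappa> v" for x y
      using \<kappa> that by (cases "x = u \<and> y = v \<or> x = v \<and> y = u") (auto simp: wcolorings_def edge_delete_def)
    then show "\<kappa> \<in> wcolorings V E w \<alpha> \<union> ?M" using \<kappa> by (auto simp: wcolorings_def)
  qed (auto simp: wcolorings_def edge_delete_def)
  have disjoint: "wcolorings V E w \<alpha> \<inter> ?M = {}"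
    using e by (auto simp: wcolorings_def)
  have "card ?M = card ?K"
  proof (rule bij_betw_same_card[of "\<lambda>\<kappa>. restrict \<kappa> (V - {v})"],
         rule bij_betw_byWitness[where f' = "\<lambda>\<kappa>. \<kappa>(v := \<kappa> u)"])
    show "\<forall>\<kappa>\<in>?M. (restrict \<kappa> (V - {v}))(v := restrict \<kappa> (V - {v}) u) = \<kappa>"
    proof (intro ballI ext)
      fix \<kappa> x assume "\<kappa> \<in> ?M"
      then show "((restrict \<kappa> (V - {v}))(v := restrict \<kappa> (V - {v}) u)) x = \<kappa> x"
        using uv by (cases "x \<in> V") (auto simp: wcolorings_def PiE_def extensional_def)
    qed
    show "\<forall>\<kappa>\<in>?K. restrict (\<kappa>(v := \<kappa> u)) (V - {v}) = \<kappa>"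
    proof (intro ballI ext)
      fix \<kappa> x assume "\<kappa> \<in> ?K"
      then show "restrict (\<kappa>(v := \<kappa> u)) (V - {v}) x = \<kappa> x"
        by (cases "x \<in> V - {v}") (auto simp: wcolorings_def PiE_def extensional_def)
    qed
    show "(\<lambda>\<kappa>. restrict \<kappa> (V - {v})) ` ?M \<subseteq> ?K"
      using restrict_in_wcolorings_contract[OF fin uv] by blast
    show "(\<lambda>\<kappa>. \<kappa>(v := \<kappa> u)) ` ?K \<subseteq> ?M"
      using extend_in_wcolorings_delete[OF fin inV irr uv] by auto
  qed
  moreover have "card ?D = card (wcolorings V E w \<alpha>) + card ?M"
    using finite_wcolorings[OF fin pos] split disjoint
    by (metis (no_types, lifting) card_Un_disjoint finite_Un)
  ultimately show ?thesis by simp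
qed

lemma in_psum_span_wcolorings:
  assumes "finite V" "\<forall>x y. E x y \<longrightarrow> x \<in> V \<and> y \<in> V" "\<forall>x. \<not> E x x" "\<forall>v\<in>V. 0 < w v"
  shows "in_psum_span (\<lambda>\<alpha>. of_nat (card (wcolorings V E w \<alpha>)))"
  using assms
proof (induction "card V" arbitrary: V E w rule: less_induct)
  case less
  note fin = less.prems(1) and pos = less.prems(4) and smaller_graph = less.hyps
  show ?case using less.prems(2,3)
  proof (induction "card {(x, y). E x y}" arbitrary: E rule: less_induct)
    case (less E)
    note inV = less.prems(1) and irr = less.prems(2)
    show ?case
    proof (cases "\<exists>u v. E u v")
      case False
      then have E: "E = (\<lambda>_ _. False)" by (simp add: fun_eq_iff)
      obtain xs where xs: "set xs = V" "distinct xs" using finite_distinct_list[OF fin] by blast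
      have "(\<lambda>\<alpha>. of_nat (card (wcolorings V E w \<alpha>))) = pprod (map w xs)"
        using card_wcolorings_edgeless[OF xs(2)] pos unfolding E xs(1)[symmetric] by simp
      moreover have "in_psum_span (pprod (map w xs))"
        using pos xs(1) by (intro in_psum_span_pprod) auto
      ultimately show ?thesis by simp
    next
      case True
      then obtain u v where e: "E u v" by blast
      have uv: "u \<in> V" "v \<in> V" using inV e by auto
      have "{(x, y). edge_delete E u v x y} \<subseteq> {(x, y). E x y}"
        by (auto simp: edge_delete_def)
      moreover have "(u, v) \<notin> {(x, y). edge_delete E u v x y}" "(u, v) \<in> {(x, y). E x y}"
        using e by (simp_all add: edge_delete_def)
      ultimately have "{(x, y). edge_delete E u v x y} \<subset> {(x, y). E x y}" by blast
      moreover have "finite {(x, y). E x y}"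
      proof (rule finite_subset)
        show "{(x, y). E x y} \<subseteq> V \<times> V" using inV by blast
      qed (simp add: fin)
      ultimately have "card {(x, y). edge_delete E u v x y} < card {(x, y). E x y}"
        by (rule psubset_card_mono[rotated])
      then have deleted: "in_psum_span (\<lambda>\<alpha>. of_nat (card (wcolorings V (edge_delete E u v) w \<alpha>)))"
        by (rule less.hyps) (use inV irr in \<open>auto simp: edge_delete_def\<close>)
      have "card (V - {v}) < card V" using fin uv(2) by (rule card_Diff1_less)
      then have contracted: "in_psum_span (\<lambda>\<alpha>. of_nat (card
          (wcolorings (V - {v}) (edge_contract V E u v) (w(u := w u + w v)) \<alpha>)))"
        by (rule smaller_graph) (use fin pos in \<open>auto simp: edge_contract_def\<close>)
      show ?thesis
        using in_psum_span_diff[OF deleted contracted]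
          card_wcolorings_delete_contract[OF fin inV irr e pos] by simp
    qed
  qed
qed

lemma in_psum_span_chrom_sym:
  assumes "simple_graph V E"
  shows "in_psum_span (chrom_sym V E)"
proof -
  have "chrom_sym V E = (\<lambda>\<alpha>. of_nat (card (wcolorings V E (\<lambda>_. 1) \<alpha>)))"
    unfolding chrom_sym_def wcolorings_def proper_coloring_def by (auto simp: fun_eq_iff)
  then show ?thesis
    using assms in_psum_span_wcolorings[of V E "\<lambda>_. 1"] by (simp add: simple_graph_def)
qed

lemma omega_in_psum_span:
  assumes "in_psum_span f"
  obtains L c where "finite L" "\<forall>lam\<in>L. \<forall>r\<in>set lam. 0 < r"
    "f = (\<lambda>\<alpha>. \<Sum>lam\<in>L. c lam * pprod lam \<alpha>)"
    "omega f = (\<lambda>\<alpha>. \<Sum>lam\<in>L. c lam * omega_sign lam * pprod lam \<alpha>)"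
proof -
  have "\<exists>g L c. finite L \<and> (\<forall>lam\<in>L. \<forall>r\<in>set lam. 0 < r) \<and>
      f = (\<lambda>\<alpha>. \<Sum>lam\<in>L. c lam * pprod lam \<alpha>) \<and>
      g = (\<lambda>\<alpha>. \<Sum>lam\<in>L. c lam * omega_sign lam * pprod lam \<alpha>)"
    using assms unfolding in_psum_span_def by blast
  from someI_ex[OF this] show ?thesis using that unfolding omega_def by blast
qed

section \<open>A functional separating Gamma from chromatic symmetric functions\<close>

text \<open>The monomial x_0^2 x_2^2 ... x_(2k-2)^2 x_(2k) x_(2k+1) ... x_(n-1): for each j < k the
  variable x_(2j+1) has been merged into x_(2j).\<close>
definition sq_monom :: "nat \<Rightarrow> nat \<Rightarrow> monom" where
  "sq_monom k n = Abs_poly_mapping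
     (\<lambda>i. if i < 2 * k then (if even i then 2 else 0) else if i < n then 1 else 0)"

lemma lookup_sq_monom:
  "Poly_Mapping.lookup (sq_monom k n) i =
     (if i < 2 * k then (if even i then 2 else 0) else if i < n then 1 else 0)"
proof -
  have "finite {i. (if i < 2 * k then (if even i then 2 else 0) else if i < n then 1 else 0) \<noteq> (0::nat)}"
    by (rule finite_subset[of _ "{..<2 * k + n}"]) (auto split: if_splits)
  then show ?thesis unfolding sq_monom_def by simp
qed

lemma exponent_count_sq_monom:
  assumes "2 * k \<le> n"
  shows "exponent_count (sq_monom k n) 2 = k" "exponent_count (sq_monom k n) 1 = n - 2 * k"
proof -
  have "{i. Poly_Mapping.lookup (sq_monom k n) i = 2} = (\<lambda>j. 2 * j) ` {..<k}"
    by (auto simp: lookup_sq_monom elim!: evenE split: if_splits)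
  then show "exponent_count (sq_monom k n) 2 = k"
    by (simp add: exponent_count_def card_image inj_on_def)
  have "{i. Poly_Mapping.lookup (sq_monom k n) i = 1} = {2 * k..<n}"
    by (auto simp: lookup_sq_monom split: if_splits)
  then show "exponent_count (sq_monom k n) 1 = n - 2 * k" by (simp add: exponent_count_def)
qed

definition phi :: "nat \<Rightarrow> fps_q \<Rightarrow> rat" where
  "phi n f = 4 * f (sq_monom 2 n) - 4 * f (sq_monom 1 n) + f (sq_monom 0 n)"

lemma phi_sum: "phi n (\<lambda>\<alpha>. \<Sum>lam\<in>L. c lam * g lam \<alpha>) = (\<Sum>lam\<in>L. c lam * phi n (g lam))"
  by (simp add: phi_def sum.distrib sum_subtractf sum_distrib_left algebra_simps)

lemma phi_pprod:
  assumes n: "4 \<le> n" and pos: "\<forall>r\<in>set lam. 0 < r"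
  shows "phi n (pprod lam) = 4 * pcoeff lam 2 (n - 4) - 4 * pcoeff lam 1 (n - 2) + pcoeff lam 0 n"
proof -
  have "pprod lam (sq_monom k n) = pcoeff lam k (n - 2 * k)" if "k \<le> 2" for k
    using n that pprod_eq_pcoeff[OF pos, of "sq_monom k n"] exponent_count_sq_monom[of k n]
    by (simp add: lookup_sq_monom)
  from this[of 0] this[of 1] this[of 2] show ?thesis by (simp add: phi_def)
qed

lemma phi_pprod_odd:
  assumes n: "4 \<le> n" and odd: "\<forall>r\<in>set lam. odd r"
  shows "phi n (pprod lam) = 0"
proof -
  have pos: "\<forall>r\<in>set lam. 0 < r" using odd by (simp add: odd_pos)
  show ?thesis
  proof (cases "set lam \<subseteq> {1, 2}")
    case True
    have "2 \<notin> set lam" using odd by force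
    then have "count_list lam 2 = 0" by (simp add: count_list_0_iff)
    moreover have "n - 4 + 4 = n" "n - 2 + 2 = n" using n by auto
    ultimately show ?thesis
      unfolding phi_pprod[OF n pos] pcoeff_0[OF True] pcoeff_1[OF True] pcoeff_2[OF True] by simp
  next
    case False
    then show ?thesis by (simp add: phi_pprod[OF n pos] pcoeff_eq_0_if_not_12)
  qed
qed

text \<open>phi only sees p_lam with no or exactly two parts equal to 2, on which omega acts trivially.\<close>
lemma phi_pprod_omega_sign:
  assumes n: "4 \<le> n" and pos: "\<forall>r\<in>set lam. 0 < r"
  shows "omega_sign lam * phi n (pprod lam) = phi n (pprod lam)"
proof (cases "set lam \<subseteq> {1, 2} \<and> odd (count_list lam 2)")
  case True
  then have lam: "set lam \<subseteq> {1, 2}" and "odd (count_list lam 2)" by blast+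
  then have "count_list lam 2 \<noteq> 0" "count_list lam 2 \<noteq> 2" by (metis dvd_0_right, metis dvd_refl)
  moreover have "n - 4 + 4 = n" "n - 2 + 2 = n" "n - 4 + 2 = n - 2" using n by auto
  ultimately have "phi n (pprod lam) = 0"
    unfolding phi_pprod[OF n pos] pcoeff_0[OF lam] pcoeff_1[OF lam] pcoeff_2[OF lam] by auto
  then show ?thesis by simp
next
  case False
  have "omega_sign lam = (-1) ^ count_list lam 2" if "set lam \<subseteq> {1, 2}"
    using that by (induction lam) (auto simp: omega_sign_def)
  then show ?thesis
    using False by (cases "set lam \<subseteq> {1, 2}") (auto simp: phi_pprod[OF n pos] pcoeff_eq_0_if_not_12)
qed

lemma phi_eq_0_if_in_Gamma:
  assumes "in_Gamma f" "4 \<le> n"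
  shows "phi n f = 0"
proof -
  obtain L c where L: "\<forall>lam\<in>L. \<forall>r\<in>set lam. odd r" "f = (\<lambda>\<alpha>. \<Sum>lam\<in>L. c lam * pprod lam \<alpha>)"
    using assms(1) unfolding in_Gamma_def by blast
  then show ?thesis using assms(2) by (simp add: phi_sum phi_pprod_odd)
qed

lemma phi_omega:
  assumes "in_psum_span f" "4 \<le> n"
  shows "phi n (omega f) = phi n f"
proof -
  obtain L c where L: "\<forall>lam\<in>L. \<forall>r\<in>set lam. 0 < r"
    "f = (\<lambda>\<alpha>. \<Sum>lam\<in>L. c lam * pprod lam \<alpha>)"
    "omega f = (\<lambda>\<alpha>. \<Sum>lam\<in>L. c lam * omega_sign lam * pprod lam \<alpha>)"
    using omega_in_psum_span[OF assms(1)] by blast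
  have "phi n (omega f) = (\<Sum>lam\<in>L. c lam * (omega_sign lam * phi n (pprod lam)))"
    unfolding L(3) phi_sum[where c = "\<lambda>lam. c lam * omega_sign lam"] by (simp add: mult.assoc)
  also have "\<dots> = phi n f"
    unfolding L(2) phi_sum using L(1) assms(2) by (simp add: phi_pprod_omega_sign)
  finally show ?thesis .
qed

section \<open>Colorings with prescribed class sizes\<close>

definition sized_colorings :: "'a set \<Rightarrow> monom \<Rightarrow> ('a \<Rightarrow> nat) set" where
  "sized_colorings V \<alpha> =
     {\<kappa> \<in> V \<rightarrow>\<^sub>E UNIV. \<forall>i. Poly_Mapping.lookup \<alpha> i = card {v\<in>V. \<kappa> v = i}}"

definition merge_color :: "'a set \<Rightarrow> nat \<Rightarrow> nat \<Rightarrow> ('a \<Rightarrow> nat) \<Rightarrow> 'a \<Rightarrow> nat" where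
  "merge_color V c' c \<kappa> = restrict (\<lambda>v. if \<kappa> v = c' then c else \<kappa> v) V"

definition edge_colored :: "('a \<Rightarrow> 'a \<Rightarrow> bool) \<Rightarrow> nat \<Rightarrow> nat \<Rightarrow> ('a \<Rightarrow> nat) \<Rightarrow> bool" where
  "edge_colored E a b \<kappa> \<longleftrightarrow> (\<exists>u v. E u v \<and> \<kappa> u = a \<and> \<kappa> v = b)"

lemma chrom_sym_eq_card_sized_colorings:
  "chrom_sym V E \<alpha> = of_nat (card {\<kappa>\<in>sized_colorings V \<alpha>. proper_coloring V E \<kappa>})"
proof -
  have "{\<kappa>. proper_coloring V E \<kappa> \<and> (\<forall>i. Poly_Mapping.lookup \<alpha> i = card {v\<in>V. \<kappa> v = i})}
     = {\<kappa>\<in>sized_colorings V \<alpha>. proper_coloring V E \<kappa>}"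
    unfolding sized_colorings_def proper_coloring_def by auto
  then show ?thesis unfolding chrom_sym_def by simp
qed

lemma finite_sized_colorings:
  assumes "finite V"
  shows "finite (sized_colorings V \<alpha>)"
proof (rule finite_subset)
  show "sized_colorings V \<alpha> \<subseteq> V \<rightarrow>\<^sub>E Poly_Mapping.keys \<alpha>"
  proof
    fix \<kappa> assume \<kappa>: "\<kappa> \<in> sized_colorings V \<alpha>"
    show "\<kappa> \<in> V \<rightarrow>\<^sub>E Poly_Mapping.keys \<alpha>"
    proof (rule PiE_I)
      fix v assume v: "v \<in> V"
      then have "card {w\<in>V. \<kappa> w = \<kappa> v} \<noteq> 0" using assms by (auto simp: card_eq_0_iff)
      then show "\<kappa> v \<in> Poly_Mapping.keys \<alpha>" using \<kappa> by (simp add: sized_colorings_def in_keys_iff)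
    next
      fix v assume "v \<notin> V"
      then show "\<kappa> v = undefined" using \<kappa> by (auto simp: sized_colorings_def)
    qed
  qed
  show "finite (V \<rightarrow>\<^sub>E Poly_Mapping.keys \<alpha>)" using assms by (intro finite_PiE) auto
qed

locale color_merge =
  fixes V :: "'a set" and c c' :: nat and \<alpha> \<alpha>' :: monom
  assumes fin: "finite V" and distinct_colors: "c \<noteq> c'"
    and sizes: "Poly_Mapping.lookup \<alpha> c = 1" "Poly_Mapping.lookup \<alpha> c' = 1"
      "Poly_Mapping.lookup \<alpha>' c = 2" "Poly_Mapping.lookup \<alpha>' c' = 0"
    and other_sizes: "\<And>i. i \<noteq> c \<Longrightarrow> i \<noteq> c' \<Longrightarrow> Poly_Mapping.lookup \<alpha>' i = Poly_Mapping.lookup \<alpha> i"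
begin

lemma merge_color_in_sized_colorings:
  assumes \<kappa>: "\<kappa> \<in> sized_colorings V \<alpha>"
  shows "merge_color V c' c \<kappa> \<in> sized_colorings V \<alpha>'"
proof -
  have size: "card {v\<in>V. \<kappa> v = i} = Poly_Mapping.lookup \<alpha> i" for i
    using \<kappa> by (simp add: sized_colorings_def)
  have "card {v\<in>V. merge_color V c' c \<kappa> v = i} = Poly_Mapping.lookup \<alpha>' i" for i
  proof -
    consider "i = c" | "i = c'" | "i \<noteq> c" "i \<noteq> c'" by blast
    then show ?thesis
    proof cases
      case 1
      have "{v\<in>V. merge_color V c' c \<kappa> v = i} = {v\<in>V. \<kappa> v = c} \<union> {v\<in>V. \<kappa> v = c'}"
        using 1 by (auto simp: merge_color_def)
      also have "card \<dots> = card {v\<in>V. \<kappa> v = c} + card {v\<in>V. \<kappa> v = c'}"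
        using fin distinct_colors by (intro card_Un_disjoint) auto
      finally show ?thesis using 1 size sizes by simp
    next
      case 2
      have "{v\<in>V. merge_color V c' c \<kappa> v = c'} = {}"
        using distinct_colors by (auto simp: merge_color_def)
      then have "card {v\<in>V. merge_color V c' c \<kappa> v = c'} = 0" by (simp only: card.empty)
      then show ?thesis using 2 sizes by simp
    next
      case 3
      then have "{v\<in>V. merge_color V c' c \<kappa> v = i} = {v\<in>V. \<kappa> v = i}"
        by (auto simp: merge_color_def)
      then show ?thesis using 3 size other_sizes by simp
    qed
  qed
  then show ?thesis by (simp add: sized_colorings_def merge_color_def)
qed

lemma recolor_in_merge_fibre:
  assumes t: "t \<in> sized_colorings V \<alpha>'" and x: "x \<in> V" "t x = c"
  shows "t(x := c') \<in> sized_colorings V \<alpha>" and "merge_color V c' c (t(x := c')) = t"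
proof -
  have t_size: "card {v\<in>V. t v = i} = Poly_Mapping.lookup \<alpha>' i" for i
    using t by (simp add: sized_colorings_def)
  have t_ext: "t \<in> V \<rightarrow>\<^sub>E UNIV" using t by (simp add: sized_colorings_def)
  have no_c': "t v \<noteq> c'" if "v \<in> V" for v
    using t_size[of c'] sizes(4) fin that by auto
  have "card {v\<in>V. (t(x := c')) v = i} = Poly_Mapping.lookup \<alpha> i" for i
  proof -
    consider "i = c" | "i = c'" | "i \<noteq> c" "i \<noteq> c'" by blast
    then show ?thesis
    proof cases
      case 1
      then have "{v\<in>V. (t(x := c')) v = i} = {v\<in>V. t v = c} - {x}"
        using distinct_colors by auto
      then show ?thesis using 1 x fin t_size[of c] sizes by simp
    next
      case 2
      then have "{v\<in>V. (t(x := c')) v = i} = {x}" using x no_c' by auto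
      then show ?thesis using 2 sizes by simp
    next
      case 3
      then have "{v\<in>V. (t(x := c')) v = i} = {v\<in>V. t v = i}" using x by auto
      then show ?thesis using 3 t_size other_sizes by simp
    qed
  qed
  then show "t(x := c') \<in> sized_colorings V \<alpha>"
    using t_ext x by (simp add: sized_colorings_def PiE_def extensional_def)
  show "merge_color V c' c (t(x := c')) = t"
    using t_ext x no_c' by (auto simp: merge_color_def PiE_def extensional_def fun_eq_iff)
qed

lemma merge_fibre_is_recoloring:
  assumes \<kappa>: "\<kappa> \<in> sized_colorings V \<alpha>"
  obtains z where "z \<in> V" "merge_color V c' c \<kappa> z = c" "\<kappa> = (merge_color V c' c \<kappa>)(z := c')"
proof -
  let ?t = "merge_color V c' c \<kappa>"
  have "card {v\<in>V. \<kappa> v = c'} = 1" using \<kappa> sizes(2) by (simp add: sized_colorings_def)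
  then obtain z where z: "{v\<in>V. \<kappa> v = c'} = {z}" by (metis card_1_singletonE)
  then have "z \<in> V" "?t z = c" by (auto simp: merge_color_def)
  moreover have "\<kappa> = ?t(z := c')"
  proof
    fix v
    show "\<kappa> v = (?t(z := c')) v"
      using \<kappa> z by (cases "v \<in> V") (auto simp: merge_color_def sized_colorings_def PiE_def extensional_def)
  qed
  ultimately show ?thesis using that by blast
qed

lemma merge_color_fibre:
  assumes t: "t \<in> sized_colorings V \<alpha>'"
  shows "bij_betw (\<lambda>x. t(x := c')) {v\<in>V. t v = c}
           {\<kappa>\<in>sized_colorings V \<alpha>. merge_color V c' c \<kappa> = t}"
proof -
  have "\<kappa> \<in> (\<lambda>x. t(x := c')) ` {v\<in>V. t v = c}"
    if "\<kappa> \<in> sized_colorings V \<alpha>" "merge_color V c' c \<kappa> = t" for \<kappa>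
    using merge_fibre_is_recoloring[OF that(1)] that(2) by blast
  moreover have "inj_on (\<lambda>x. t(x := c')) {v\<in>V. t v = c}"
    using distinct_colors by (auto simp: inj_on_def fun_eq_iff)
  ultimately show ?thesis
    using recolor_in_merge_fibre[OF t] by (auto simp: bij_betw_def)
qed

lemma card_merge_color:
  "card {\<kappa>\<in>sized_colorings V \<alpha>. P (merge_color V c' c \<kappa>)} =
     2 * card {t\<in>sized_colorings V \<alpha>'. P t}"
proof -
  let ?fibre = "\<lambda>t. {\<kappa>\<in>sized_colorings V \<alpha>. merge_color V c' c \<kappa> = t}"
  have "{\<kappa>\<in>sized_colorings V \<alpha>. P (merge_color V c' c \<kappa>)} =
      (\<Union>t\<in>{t\<in>sized_colorings V \<alpha>'. P t}. ?fibre t)"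
    using merge_color_in_sized_colorings by auto
  then have "card {\<kappa>\<in>sized_colorings V \<alpha>. P (merge_color V c' c \<kappa>)} =
      card (\<Union>t\<in>{t\<in>sized_colorings V \<alpha>'. P t}. ?fibre t)" by (rule arg_cong)
  also have "\<dots> = (\<Sum>t\<in>{t\<in>sized_colorings V \<alpha>'. P t}. card (?fibre t))"
    using finite_sized_colorings[OF fin] by (intro card_UN_disjoint) auto
  also have "\<dots> = (\<Sum>t\<in>{t\<in>sized_colorings V \<alpha>'. P t}. 2)"
  proof (rule sum.cong[OF refl])
    fix t assume "t \<in> {t\<in>sized_colorings V \<alpha>'. P t}"
    then have "card (?fibre t) = card {v\<in>V. t v = c}"
      and "card {v\<in>V. t v = c} = 2"
      using merge_color_fibre[of t] sizes(3) by (auto simp: bij_betw_same_card sized_colorings_def)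
    then show "card (?fibre t) = 2" by simp
  qed
  finally show ?thesis by simp
qed

end

lemma color_merge_sq_monom:
  assumes "finite V" "2 * Suc k \<le> n"
  shows "color_merge V (2 * k) (2 * k + 1) (sq_monom k n) (sq_monom (Suc k) n)"
proof
  have "i < 2 * Suc k \<longleftrightarrow> i < 2 * k" if "i \<noteq> 2 * k" "i \<noteq> 2 * k + 1" for i
    using that by (auto simp: less_Suc_eq)
  then show "Poly_Mapping.lookup (sq_monom (Suc k) n) i = Poly_Mapping.lookup (sq_monom k n) i"
    if "i \<noteq> 2 * k" "i \<noteq> 2 * k + 1" for i
    using that by (simp add: lookup_sq_monom)
qed (use assms in \<open>simp_all add: lookup_sq_monom\<close>)

lemma inj_on_sized_colorings_sq_monom_0:
  assumes "finite V" "\<beta> \<in> sized_colorings V (sq_monom 0 n)"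
  shows "inj_on \<beta> V"
proof (rule inj_onI)
  fix u v assume uv: "u \<in> V" "v \<in> V" "\<beta> u = \<beta> v"
  have "\<forall>i. Poly_Mapping.lookup (sq_monom 0 n) i = card {w\<in>V. \<beta> w = i}"
    using assms(2) by (simp add: sized_colorings_def)
  from this[rule_format, of "\<beta> u", symmetric] have "card {w\<in>V. \<beta> w = \<beta> u} \<le> 1"
    by (simp add: lookup_sq_monom)
  moreover have "u \<in> {w\<in>V. \<beta> w = \<beta> u}" "v \<in> {w\<in>V. \<beta> w = \<beta> u}" using uv by auto
  ultimately show "u = v" using assms(1) by (auto simp: card_le_Suc0_iff_eq)
qed

lemma proper_merge_color_iff:
  assumes inV: "\<forall>x y. E x y \<longrightarrow> x \<in> V \<and> y \<in> V" and sym: "\<forall>x y. E x y \<longrightarrow> E y x"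
    and \<kappa>: "\<kappa> \<in> V \<rightarrow>\<^sub>E UNIV" and cc: "c \<noteq> c'"
  shows "proper_coloring V E (merge_color V c' c \<kappa>) \<longleftrightarrow>
    proper_coloring V E \<kappa> \<and> \<not> edge_colored E c c' \<kappa>"
proof -
  let ?m = "merge_color V c' c \<kappa>"
  have edge: "?m u \<noteq> ?m v \<longleftrightarrow> \<kappa> u \<noteq> \<kappa> v \<and> \<not> (\<kappa> u = c \<and> \<kappa> v = c') \<and> \<not> (\<kappa> u = c' \<and> \<kappa> v = c)"
    if "E u v" for u v
    using inV that cc by (auto simp: merge_color_def)
  have "(\<forall>u v. E u v \<longrightarrow> ?m u \<noteq> ?m v) \<longleftrightarrow>
      (\<forall>u v. E u v \<longrightarrow> \<kappa> u \<noteq> \<kappa> v) \<and> \<not> edge_colored E c c' \<kappa>"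
  proof (intro iffI conjI allI impI)
    fix u v assume h: "\<forall>u v. E u v \<longrightarrow> ?m u \<noteq> ?m v" and e: "E u v"
    then show "\<kappa> u \<noteq> \<kappa> v" using edge by blast
  next
    assume h: "\<forall>u v. E u v \<longrightarrow> ?m u \<noteq> ?m v"
    show "\<not> edge_colored E c c' \<kappa>"
    proof
      assume "edge_colored E c c' \<kappa>"
      then obtain u v where "E u v" "\<kappa> u = c" "\<kappa> v = c'" by (auto simp: edge_colored_def)
      then show False using h edge by blast
    qed
  next
    fix u v assume h: "(\<forall>u v. E u v \<longrightarrow> \<kappa> u \<noteq> \<kappa> v) \<and> \<not> edge_colored E c c' \<kappa>" and e: "E u v"
    then have "\<not> (\<kappa> u = c \<and> \<kappa> v = c')" "\<not> (\<kappa> u = c' \<and> \<kappa> v = c)"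
      using sym unfolding edge_colored_def by blast+
    then show "?m u \<noteq> ?m v" using edge[OF e] h e by blast
  qed
  moreover have "?m \<in> V \<rightarrow>\<^sub>E UNIV" by (simp add: merge_color_def)
  ultimately show ?thesis using \<kappa> by (simp add: proper_coloring_def)
qed

lemma edge_colored_merge_color_other:
  assumes inV: "\<forall>x y. E x y \<longrightarrow> x \<in> V \<and> y \<in> V" and "a \<notin> {c, c'}" "b \<notin> {c, c'}"
  shows "edge_colored E a b (merge_color V c' c \<kappa>) \<longleftrightarrow> edge_colored E a b \<kappa>"
  using assms by (auto simp: edge_colored_def merge_color_def)

lemma card_sized_colorings_permute:
  assumes inv: "\<And>i. \<pi> (\<pi> i) = i" and \<alpha>: "\<And>i. Poly_Mapping.lookup \<alpha> (\<pi> i) = Poly_Mapping.lookup \<alpha> i"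
  shows "card {\<beta>\<in>sized_colorings V \<alpha>. P (restrict (\<pi> \<circ> \<beta>) V)} = card {\<beta>\<in>sized_colorings V \<alpha>. P \<beta>}"
proof (rule bij_betw_same_card[of "\<lambda>\<beta>. restrict (\<pi> \<circ> \<beta>) V"],
       rule bij_betw_byWitness[where f' = "\<lambda>\<beta>. restrict (\<pi> \<circ> \<beta>) V"])
  have recolor_in: "restrict (\<pi> \<circ> \<beta>) V \<in> sized_colorings V \<alpha>" if "\<beta> \<in> sized_colorings V \<alpha>" for \<beta>
  proof -
    have "{v\<in>V. restrict (\<pi> \<circ> \<beta>) V v = i} = {v\<in>V. \<beta> v = \<pi> i}" for i
      using inv by auto
    then show ?thesis using that \<alpha> by (simp add: sized_colorings_def)
  qed
  have twice: "restrict (\<pi> \<circ> restrict (\<pi> \<circ> \<beta>) V) V = \<beta>" if "\<beta> \<in> sized_colorings V \<alpha>" for \<beta>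
  proof
    fix v show "restrict (\<pi> \<circ> restrict (\<pi> \<circ> \<beta>) V) V v = \<beta> v"
      using that inv by (cases "v \<in> V") (auto simp: sized_colorings_def PiE_def extensional_def)
  qed
  show "\<forall>\<beta>\<in>{\<beta>\<in>sized_colorings V \<alpha>. P (restrict (\<pi> \<circ> \<beta>) V)}. restrict (\<pi> \<circ> restrict (\<pi> \<circ> \<beta>) V) V = \<beta>"
    "\<forall>\<beta>\<in>{\<beta>\<in>sized_colorings V \<alpha>. P \<beta>}. restrict (\<pi> \<circ> restrict (\<pi> \<circ> \<beta>) V) V = \<beta>"
    using twice by auto
  show "(\<lambda>\<beta>. restrict (\<pi> \<circ> \<beta>) V) ` {\<beta>\<in>sized_colorings V \<alpha>. P (restrict (\<pi> \<circ> \<beta>) V)}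
      \<subseteq> {\<beta>\<in>sized_colorings V \<alpha>. P \<beta>}"
    using recolor_in by auto
  show "(\<lambda>\<beta>. restrict (\<pi> \<circ> \<beta>) V) ` {\<beta>\<in>sized_colorings V \<alpha>. P \<beta>}
      \<subseteq> {\<beta>\<in>sized_colorings V \<alpha>. P (restrict (\<pi> \<circ> \<beta>) V)}"
    using recolor_in twice by auto
qed

lemma card_conj_by_complements:
  assumes "finite A"
  shows "int (card {x\<in>A. P x \<and> Q x}) = int (card {x\<in>A. \<not> P x \<and> \<not> Q x})
    - int (card {x\<in>A. \<not> P x}) - int (card {x\<in>A. \<not> Q x}) + int (card A)"
proof -
  have card_sum: "int (card {x\<in>A. R x}) = (\<Sum>x\<in>A. of_bool (R x))" for R
    using assms by (simp add: Collect_conj_eq Int_commute)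
  have "(\<Sum>x\<in>A. of_bool (P x \<and> Q x) :: int) = (\<Sum>x\<in>A. of_bool (\<not> P x \<and> \<not> Q x)
      - of_bool (\<not> P x) - of_bool (\<not> Q x) + 1)"
    by (rule sum.cong) auto
  then show ?thesis
    unfolding card_sum using card_sum[of "\<lambda>_. True"] by (simp add: sum.distrib sum_subtractf)
qed

lemma proper_merges_sq_monom_0:
  assumes sg: "simple_graph V E" and \<beta>: "\<beta> \<in> sized_colorings V (sq_monom 0 n)"
  shows "proper_coloring V E \<beta>"
    and "proper_coloring V E (merge_color V 1 0 \<beta>) \<longleftrightarrow> \<not> edge_colored E 0 1 \<beta>"
    and "proper_coloring V E (merge_color V 3 2 (merge_color V 1 0 \<beta>)) \<longleftrightarrow>
      \<not> edge_colored E 0 1 \<beta> \<and> \<not> edge_colored E 2 3 \<beta>"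
proof -
  have fin: "finite V" and inV: "\<forall>x y. E x y \<longrightarrow> x \<in> V \<and> y \<in> V"
    and sym: "\<forall>x y. E x y \<longrightarrow> E y x" and irr: "\<forall>x. \<not> E x x"
    using sg unfolding simple_graph_def by blast+
  have ext: "\<beta> \<in> V \<rightarrow>\<^sub>E UNIV" using \<beta> by (simp add: sized_colorings_def)
  show proper: "proper_coloring V E \<beta>"
    using inj_on_sized_colorings_sq_monom_0[OF fin \<beta>] inV irr ext
    unfolding proper_coloring_def inj_on_def by metis
  show merged01: "proper_coloring V E (merge_color V 1 0 \<beta>) \<longleftrightarrow> \<not> edge_colored E 0 1 \<beta>"
    using proper_merge_color_iff[OF inV sym ext] proper by simp
  show "proper_coloring V E (merge_color V 3 2 (merge_color V 1 0 \<beta>)) \<longleftrightarrow>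
      \<not> edge_colored E 0 1 \<beta> \<and> \<not> edge_colored E 2 3 \<beta>"
    using proper_merge_color_iff[OF inV sym, of "merge_color V 1 0 \<beta>" 2 3] merged01
      edge_colored_merge_color_other[OF inV, of 2 0 1 3 \<beta>]
    by (simp add: merge_color_def)
qed

lemma card_not_edge_colored_swap:
  assumes inV: "\<forall>x y. E x y \<longrightarrow> x \<in> V \<and> y \<in> V" and n: "4 \<le> n"
  shows "card {\<beta>\<in>sized_colorings V (sq_monom 0 n). \<not> edge_colored E 0 1 \<beta>} =
    card {\<beta>\<in>sized_colorings V (sq_monom 0 n). \<not> edge_colored E 2 3 \<beta>}"
proof -
  define \<pi> :: "nat \<Rightarrow> nat" where
    "\<pi> i = (if i = 0 then 2 else if i = 1 then 3 else if i = 2 then 0 else if i = 3 then 1 else i)" for i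
  have "\<pi> j = 0 \<longleftrightarrow> j = 2" "\<pi> j = 1 \<longleftrightarrow> j = 3" for j by (auto simp: \<pi>_def)
  then have "edge_colored E 0 1 (restrict (\<pi> \<circ> \<beta>) V) \<longleftrightarrow> edge_colored E 2 3 \<beta>" for \<beta>
    using inV unfolding edge_colored_def by (auto; blast)
  moreover have "\<pi> (\<pi> i) = i"
    "Poly_Mapping.lookup (sq_monom 0 n) (\<pi> i) = Poly_Mapping.lookup (sq_monom 0 n) i" for i
    using n by (auto simp: \<pi>_def lookup_sq_monom)
  ultimately show ?thesis
    using card_sized_colorings_permute[of \<pi> "sq_monom 0 n" V "\<lambda>\<beta>. \<not> edge_colored E 0 1 \<beta>"] by simp
qed

lemma phi_chrom_sym:
  assumes sg: "simple_graph V E" and n: "card V = n" "4 \<le> n"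
  shows "phi n (chrom_sym V E) = of_nat (card {\<beta>\<in>sized_colorings V (sq_monom 0 n).
      edge_colored E 0 1 \<beta> \<and> edge_colored E 2 3 \<beta>})"
proof -
  have fin: "finite V" and inV: "\<forall>x y. E x y \<longrightarrow> x \<in> V \<and> y \<in> V"
    using sg unfolding simple_graph_def by blast+
  let ?A = "sized_colorings V (sq_monom 0 n)"
  let ?proper = "proper_coloring V E"
  note merged = proper_merges_sq_monom_0[OF sg]
  interpret merge01: color_merge V 0 1 "sq_monom 0 n" "sq_monom 1 n"
    using color_merge_sq_monom[OF fin, of 0 n] n by simp
  interpret merge23: color_merge V 2 3 "sq_monom 1 n" "sq_monom 2 n"
    using color_merge_sq_monom[OF fin, of 1 n] n by (simp add: numeral_2_eq_2 numeral_3_eq_3)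
  have "card {\<beta>\<in>?A. \<not> edge_colored E 0 1 \<beta> \<and> \<not> edge_colored E 2 3 \<beta>} =
      card {\<beta>\<in>?A. ?proper (merge_color V 3 2 (merge_color V 1 0 \<beta>))}"
    using merged(3) by (intro arg_cong[where f = card]) auto
  also have "\<dots> = 2 * card {\<kappa>\<in>sized_colorings V (sq_monom 1 n). ?proper (merge_color V 3 2 \<kappa>)}"
    by (rule merge01.card_merge_color)
  also have "\<dots> = 4 * card {\<kappa>\<in>sized_colorings V (sq_monom 2 n). ?proper \<kappa>}"
    using merge23.card_merge_color[of ?proper] by simp
  finally have "4 * card {\<kappa>\<in>sized_colorings V (sq_monom 2 n). ?proper \<kappa>} =
      card {\<beta>\<in>?A. \<not> edge_colored E 0 1 \<beta> \<and> \<not> edge_colored E 2 3 \<beta>}" ..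
  moreover have "2 * card {\<kappa>\<in>sized_colorings V (sq_monom 1 n). ?proper \<kappa>} =
      card {\<beta>\<in>?A. \<not> edge_colored E 0 1 \<beta>}"
    using merge01.card_merge_color[of ?proper] merged(2) by (metis (no_types, lifting) Collect_cong)
  moreover have "{\<beta>\<in>?A. ?proper \<beta>} = ?A" using merged(1) by blast
  ultimately show ?thesis
    using card_conj_by_complements[OF finite_sized_colorings[OF fin],
        of "sq_monom 0 n" "edge_colored E 0 1" "edge_colored E 2 3"]
      card_not_edge_colored_swap[OF inV n(2)]
    by (simp add: phi_def chrom_sym_eq_card_sized_colorings)
qed

lemma bij_betw_in_sized_colorings_sq_monom_0:
  assumes "bij_betw \<beta> V {..<n}"
  shows "restrict \<beta> V \<in> sized_colorings V (sq_monom 0 n)"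
proof -
  have "card {v\<in>V. restrict \<beta> V v = i} = (if i < n then 1 else 0)" for i
  proof (cases "i < n")
    case True
    then obtain v where v: "v \<in> V" "\<beta> v = i"
      using assms unfolding bij_betw_def by (metis imageE lessThan_iff)
    then have "{w\<in>V. restrict \<beta> V w = i} = {v}"
      using assms unfolding bij_betw_def inj_on_def by auto
    then show ?thesis using True by simp
  next
    case False
    then have "{w\<in>V. restrict \<beta> V w = i} = {}" using assms unfolding bij_betw_def by auto
    then show ?thesis using False by (simp only: card.empty if_False)
  qed
  then show ?thesis by (simp add: sized_colorings_def lookup_sq_monom)
qed

lemma coloring_with_disjoint_edges:
  assumes sg: "simple_graph V E" and d: "disjoint_edges E v1 v2 v3 v4"
  obtains \<beta> where "\<beta> \<in> sized_colorings V (sq_monom 0 (card V))"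
    "edge_colored E 0 1 \<beta>" "edge_colored E 2 3 \<beta>"
proof -
  have fin: "finite V" and inV: "\<And>x y. E x y \<Longrightarrow> x \<in> V \<and> y \<in> V"
    using sg unfolding simple_graph_def by blast+
  have e: "E v1 v2" "E v3 v4" and ds: "distinct [v1, v2, v3, v4]"
    using d unfolding disjoint_edges_def by auto
  let ?Q = "{v1, v2, v3, v4}" and ?n = "card V"
  have Q: "?Q \<subseteq> V" using inV e by auto
  have cQ: "card ?Q = 4" using ds by simp
  then have n4: "4 \<le> ?n" using card_mono[OF fin Q] by simp
  have "card (V - ?Q) = card {4..<?n}" using card_Diff_subset[OF _ Q] cQ by simp
  then obtain g where g: "bij_betw g (V - ?Q) {4..<?n}"
    using fin by (metis finite_Diff finite_atLeastLessThan finite_same_card_bij)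
  define f where "f v = (if v = v1 then 0 else if v = v2 then 1 else if v = v3 then 2
    else if v = v4 then 3 else g v)" for v
  have "bij_betw f ?Q {0, 1, 2, 3}"
    using ds unfolding bij_betw_def inj_on_def f_def by auto
  moreover have "bij_betw f (V - ?Q) {4..<?n}"
    using g by (rule bij_betw_cong[THEN iffD1, rotated]) (auto simp: f_def)
  ultimately have "bij_betw f (?Q \<union> (V - ?Q)) ({0, 1, 2, 3} \<union> {4..<?n})"
    by (rule bij_betw_combine) auto
  moreover have "?Q \<union> (V - ?Q) = V" "{0, 1, 2, 3} \<union> {4..<?n} = {..<?n}" using Q n4 by auto
  ultimately have "restrict f V \<in> sized_colorings V (sq_monom 0 ?n)"
    using bij_betw_in_sized_colorings_sq_monom_0 by metis
  moreover have "edge_colored E 0 1 (restrict f V)"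
    unfolding edge_colored_def using e Q ds by (intro exI[of _ v1] exI[of _ v2]) (auto simp: f_def)
  moreover have "edge_colored E 2 3 (restrict f V)"
    unfolding edge_colored_def using e Q ds by (intro exI[of _ v3] exI[of _ v4]) (auto simp: f_def)
  ultimately show ?thesis using that by blast
qed

lemma no_disjoint_edges_if_in_Gamma:
  assumes sg: "simple_graph V E" and Gamma: "in_Gamma (near_chrom_sym V E)"
  shows "\<not> disjoint_edges E v1 v2 v3 v4"
proof
  assume d: "disjoint_edges E v1 v2 v3 v4"
  let ?n = "card V" and ?X = "chrom_sym V E"
  have fin: "finite V" using sg by (simp add: simple_graph_def)
  obtain \<beta> where \<beta>: "\<beta> \<in> sized_colorings V (sq_monom 0 ?n)"
    "edge_colored E 0 1 \<beta>" "edge_colored E 2 3 \<beta>"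
    using coloring_with_disjoint_edges[OF sg d] .
  have n4: "4 \<le> ?n"
    using d sg card_mono[OF fin, of "{v1, v2, v3, v4}"]
    by (auto simp: disjoint_edges_def simple_graph_def)
  have "phi ?n (near_chrom_sym V E) = (phi ?n ?X + phi ?n (omega ?X)) / 2"
    by (simp add: phi_def near_chrom_sym_def field_simps)
  then have "phi ?n ?X = 0"
    using phi_eq_0_if_in_Gamma[OF Gamma n4] phi_omega[OF in_psum_span_chrom_sym[OF sg] n4] by simp
  moreover have "card {\<beta>\<in>sized_colorings V (sq_monom 0 ?n).
      edge_colored E 0 1 \<beta> \<and> edge_colored E 2 3 \<beta>} \<noteq> 0"
    using \<beta> finite_sized_colorings[OF fin] by (auto simp: card_eq_0_iff)
  ultimately show False using phi_chrom_sym[OF sg refl n4] by simp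
qed

section \<open>Connected graphs without disjoint edges\<close>

lemma star_iso:
  assumes fin: "finite V" and c: "c \<in> V"
    and E: "\<And>x y. E x y \<longleftrightarrow> x \<in> V \<and> y \<in> V \<and> x \<noteq> y \<and> (x = c \<or> y = c)"
  shows "graph_iso V E {0..<card V} (star_edges (card V))"
proof -
  let ?n = "card V"
  have "card (V - {c}) = card {1..<?n}" using fin c by simp
  then obtain g where g: "bij_betw g (V - {c}) {1..<?n}"
    using fin by (metis finite_Diff finite_atLeastLessThan finite_same_card_bij)
  define f where "f x = (if x = c then 0 else g x)" for x
  have "bij_betw f (V - {c}) {1..<?n}"
    using g by (rule bij_betw_cong[THEN iffD1, rotated]) (simp add: f_def)
  then have "bij_betw f ((V - {c}) \<union> {c}) ({1..<?n} \<union> {0})"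
    using notIn_Un_bij_betw[of c "V - {c}" f "{1..<?n}"] by (auto simp: f_def)
  moreover have "(V - {c}) \<union> {c} = V" "{1..<?n} \<union> {0} = {0..<?n}"
    using c fin card_gt_0_iff by fastforce+
  ultimately have f: "bij_betw f V {0..<?n}" by simp
  have f0: "f x = 0 \<longleftrightarrow> x = c" if "x \<in> V" for x
  proof -
    have "x \<noteq> c \<Longrightarrow> g x \<in> {1..<?n}" using g that by (auto simp: bij_betw_def)
    then show ?thesis by (auto simp: f_def)
  qed
  show ?thesis unfolding graph_iso_def
  proof (intro exI conjI ballI)
    fix u v assume uv: "u \<in> V" "v \<in> V"
    have "f u < ?n" "f v < ?n" "f u = f v \<longleftrightarrow> u = v"
      using f uv by (auto simp: bij_betw_def inj_on_def)
    then show "E u v \<longleftrightarrow> star_edges ?n (f u) (f v)"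
      using f0 uv E unfolding star_edges_def by auto
  qed (fact f)
qed

lemma triangle_iso:
  assumes V: "V = {a, b, c}" and d: "distinct [a, b, c]"
    and E: "\<And>x y. E x y \<longleftrightarrow> x \<in> V \<and> y \<in> V \<and> x \<noteq> y"
  shows "graph_iso V E {0::nat, 1, 2} C3_edges"
proof -
  define f where "f x = (if x = a then 0 else if x = b then 1 else (2::nat))" for x
  have "bij_betw f V {0, 1, 2}" using d unfolding V bij_betw_def inj_on_def f_def by auto
  moreover have "\<forall>u\<in>V. \<forall>v\<in>V. E u v \<longleftrightarrow> C3_edges (f u) (f v)"
    using d unfolding V E C3_edges_def f_def by auto
  ultimately show ?thesis unfolding graph_iso_def by blast
qed

lemma edges_intersect:
  assumes "simple_graph V E" and "\<nexists>v1 v2 v3 v4. disjoint_edges E v1 v2 v3 v4"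
    and "E a b" "E c d"
  shows "a = c \<or> a = d \<or> b = c \<or> b = d"
proof (rule ccontr)
  assume "\<not> ?thesis"
  moreover have "a \<noteq> b" "c \<noteq> d" using assms(1,3,4) unfolding simple_graph_def by metis+
  ultimately have "disjoint_edges E a b c d" using assms(3,4) unfolding disjoint_edges_def by auto
  then show False using assms(2) by blast
qed

lemma connected_star_iso:
  assumes sg: "simple_graph V E" and con: "graph_connected V E"
    and c: "c \<in> V" and centre: "\<And>x y. E x y \<Longrightarrow> x = c \<or> y = c"
  shows "graph_iso V E {0..<card V} (star_edges (card V))"
proof (rule star_iso[OF _ c])
  show "finite V" using sg by (simp add: simple_graph_def)
  have irr: "\<And>x. \<not> E x x" using sg by (simp add: simple_graph_def)
  have "y = c \<or> E c y" if "E\<^sup>*\<^sup>* c y" for y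
    using that
  proof (induction rule: rtranclp_induct)
    case (step y z)
    then show ?case using centre irr by metis
  qed simp
  then show "E x y \<longleftrightarrow> x \<in> V \<and> y \<in> V \<and> x \<noteq> y \<and> (x = c \<or> y = c)" for x y
    using c con centre sg unfolding graph_connected_def simple_graph_def by metis
qed

lemma connected_triangle_iso:
  assumes sg: "simple_graph V E" and nd: "\<nexists>v1 v2 v3 v4. disjoint_edges E v1 v2 v3 v4"
    and con: "graph_connected V E" and uvw: "E u v" "E u w" "E v w"
  shows "graph_iso V E {0::nat, 1, 2} C3_edges"
proof (rule triangle_iso)
  have inV: "\<And>x y. E x y \<Longrightarrow> x \<in> V \<and> y \<in> V" and sym: "\<And>x y. E x y \<Longrightarrow> E y x"
    and irr: "\<And>x. \<not> E x x"
    using sg unfolding simple_graph_def by blast+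
  show d: "distinct [u, v, w]" using uvw irr by auto
  have in_triangle: "x \<in> {u, v, w} \<and> y \<in> {u, v, w}" if "E x y" for x y
    using edges_intersect[OF sg nd that uvw(1)] edges_intersect[OF sg nd that uvw(2)]
      edges_intersect[OF sg nd that uvw(3)] d by auto
  have "E\<^sup>*\<^sup>* u y \<Longrightarrow> y \<in> {u, v, w}" for y
    by (induction rule: rtranclp_induct) (use in_triangle in auto)
  then show V: "V = {u, v, w}"
    using con inV uvw unfolding graph_connected_def by blast
  show "E x y \<longleftrightarrow> x \<in> V \<and> y \<in> V \<and> x \<noteq> y" for x y
  proof
    assume "x \<in> V \<and> y \<in> V \<and> x \<noteq> y"
    then show "E x y" unfolding V using uvw sym by auto
  qed (use inV irr in metis)
qed

lemma triangle_free_edges_have_centre: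
  assumes sg: "simple_graph V E" and nd: "\<nexists>v1 v2 v3 v4. disjoint_edges E v1 v2 v3 v4"
    and no_triangle: "\<nexists>u v w. E u v \<and> E u w \<and> E v w" and uv: "E u v"
  shows "\<exists>c\<in>V. \<forall>x y. E x y \<longrightarrow> x = c \<or> y = c"
proof (cases "\<forall>x y. E x y \<longrightarrow> x = u \<or> y = u")
  case True
  then show ?thesis using sg uv by (intro bexI[of _ u]) (auto simp: simple_graph_def)
next
  case False
  have sym: "\<And>x y. E x y \<Longrightarrow> E y x" and irr: "\<And>x. \<not> E x x"
    using sg unfolding simple_graph_def by blast+
  from False obtain x y where xy: "E x y" "x \<noteq> u" "y \<noteq> u" by blast
  obtain z where z: "E v z" "z \<noteq> u"
    using edges_intersect[OF sg nd xy(1) uv] xy sym by metis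
  have "a = v \<or> b = v" if ab: "E a b" for a b
  proof (rule ccontr)
    assume "\<not> (a = v \<or> b = v)"
    then have "E u z"
      using edges_intersect[OF sg nd ab uv] edges_intersect[OF sg nd ab z(1)] ab z irr sym by metis
    then show False using no_triangle z uv by blast
  qed
  then show ?thesis using sg uv by (intro bexI[of _ v]) (auto simp: simple_graph_def)
qed

lemma connected_no_disjoint_edges_iso:
  assumes sg: "simple_graph V E" and nd: "\<nexists>v1 v2 v3 v4. disjoint_edges E v1 v2 v3 v4"
    and con: "graph_connected V E"
  shows "graph_iso V E {0::nat, 1, 2} C3_edges \<or>
    (\<exists>n::nat. n \<ge> 1 \<and> graph_iso V E {0..<n} (star_edges n))"
proof -
  have star: "\<exists>n::nat. n \<ge> 1 \<and> graph_iso V E {0..<n} (star_edges n)"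
    if "c \<in> V" "\<forall>x y. E x y \<longrightarrow> x = c \<or> y = c" for c
  proof (intro exI conjI)
    show "graph_iso V E {0..<card V} (star_edges (card V))"
      using connected_star_iso[OF sg con] that by blast
    show "1 \<le> card V" using sg that(1) by (auto simp: simple_graph_def Suc_le_eq card_gt_0_iff)
  qed
  consider "\<exists>u v w. E u v \<and> E u w \<and> E v w" | "\<exists>u v. E u v" "\<nexists>u v w. E u v \<and> E u w \<and> E v w"
    | "\<nexists>u v. E u v" by blast
  then show ?thesis
  proof cases
    case 1
    then show ?thesis using connected_triangle_iso[OF sg nd con] by blast
  next
    case 2
    then show ?thesis using triangle_free_edges_have_centre[OF sg nd] star by blast
  next
    case 3
    then show ?thesis using con star unfolding graph_connected_def by blast
  qed
qed

theorem mainTheorem3: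
  fixes V :: "'a set" and E :: "'a \<Rightarrow> 'a \<Rightarrow> bool"
  assumes "simple_graph V E"
    and "in_Gamma (near_chrom_sym V E)"
  shows "(\<nexists>v1 v2 v3 v4. disjoint_edges E v1 v2 v3 v4)
    \<and> (graph_connected V E \<longrightarrow>
         graph_iso V E {0::nat, 1, 2} C3_edges \<or>
         (\<exists>n::nat. n \<ge> 1 \<and> graph_iso V E {0..<n} (star_edges n)))"
  using no_disjoint_edges_if_in_Gamma[OF assms] connected_no_disjoint_edges_iso[OF assms(1)]
  by blast

end
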